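(* Let $h>0$, $\beta>0$, $f(x)=hx$, $g(r)=\frac12\log(1-r^2)+\frac{\beta^2}{2}(1-r^2)^2$, $q_P=\max\big(1-\frac{1}{\sqrt2\beta},0\big)$, $\mathrm{Plef}(\beta)=[\sqrt{q_P},1]$, and $\tilde{\mathcal{B}}(\alpha,r)=f(r\alpha)+\sqrt2\beta r^2\sqrt{1-\alpha^2}+g(r)$. Then $$\sup_{r\in\mathrm{Plef}(\beta),\,\alpha\in[-1,1]}\tilde{\mathcal{B}}(\alpha,r)=\sup_{q\in[q_P,1)}\mathscr{B}(q),\qquad \mathscr{B}(q)=\sqrt{h^2q+2\beta^2q^2}+\frac12\log(1-q)+\frac{\beta^2}{2}(1-q)^2,$$ where $\mathscr{B}$ is concave on $[q_P,1)$ with a unique maximizer $\hat q$, which is the unique solution in $(q_P,1)$ of $$\frac{q}{h^2+2q\beta^2}=(1-q)^2.$$ Moreover the unique maximizer of the left-hand side is $\hat r=\sqrt{\hat q}$, $\hat\alpha=\frac{h}{\sqrt{h^2+2\beta^2\hat q}}$.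
   Context: At $r=1$, $g(1)=-\infty$ and hence $\tilde{\mathcal{B}}(\alpha,1)=-\infty$. *)

theory Defs
  imports "HOL-Analysis.Analysis" "HOL-Library.Extended_Real"
begin

definition qP :: "real \<Rightarrow> real" where
  "qP \<beta> = max (1 - 1 / (sqrt 2 * \<beta>)) 0"

definition Plef :: "real \<Rightarrow> real set" where
  "Plef \<beta> = {sqrt (qP \<beta>) .. 1}"

definition gfun :: "real \<Rightarrow> real \<Rightarrow> ereal" where
  "gfun \<beta> r = (if r\<^sup>2 = 1 then -\<infinity>
      else ereal (ln (1 - r\<^sup>2) / 2 + \<beta>\<^sup>2 / 2 * (1 - r\<^sup>2)\<^sup>2))"

definition Btilde :: "real \<Rightarrow> real \<Rightarrow> real \<Rightarrow> real \<Rightarrow> ereal" where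
  "Btilde h \<beta> \<alpha> r = ereal (h * (r * \<alpha>) + sqrt 2 * \<beta> * r\<^sup>2 * sqrt (1 - \<alpha>\<^sup>2)) + gfun \<beta> r"

definition Bscr :: "real \<Rightarrow> real \<Rightarrow> real \<Rightarrow> real" where
  "Bscr h \<beta> q = sqrt (h\<^sup>2 * q + 2 * \<beta>\<^sup>2 * q\<^sup>2) + ln (1 - q) / 2 + \<beta>\<^sup>2 / 2 * (1 - q)\<^sup>2"

end

theory Submission
  imports Defs
begin

text \<open>For fixed r the \<alpha>-dependent part of \<open>Btilde\<close> is a linear form in the unit
  vector (\<alpha>, sqrt (1 - \<alpha>^2)), so by Cauchy-Schwarz its maximum over \<alpha> is
  sqrt (h^2 r^2 + 2 \<beta>^2 r^4), attained only at \<alpha> = h / sqrt (h^2 + 2 \<beta>^2 r^2);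
  with q = r^2 this turns the double supremum into the supremum of \<open>Bscr\<close>.
  \<open>Bscr\<close> is the sum of sqrt (q (h^2 + 2 \<beta>^2 q)), a geometric mean of two affine
  functions and hence (again by Cauchy-Schwarz) strictly concave for h \<noteq> 0, and of
  ln (1 - q) / 2 + \<beta>^2 (1 - q)^2 / 2, which is concave exactly for
  q \<ge> 1 - 1 / (sqrt 2 \<beta>). The equation characterising the maximizer is the vanishing of
  the derivative of \<open>Bscr\<close>; it has a root in (qP, 1) by the intermediate value theorem,
  a stationary point of a concave function is a maximum, and strict concavity makes the
  maximizer, hence also the root, unique.\<close>

lemma lagrange_identity_weighted:
  fixes u v a b c d :: real
  shows "(u * a\<^sup>2 + v * b\<^sup>2) * (u * c\<^sup>2 + v * d\<^sup>2)
    = (u * a * c + v * b * d)\<^sup>2 + u * v * (a * d - b * c)\<^sup>2"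
  by (simp add: power2_eq_square algebra_simps)

lemma weighted_cauchy_schwarz2:
  fixes u v a b c d :: real
  assumes "0 \<le> u" "0 \<le> v"
  shows "u * a * c + v * b * d \<le> sqrt ((u * a\<^sup>2 + v * b\<^sup>2) * (u * c\<^sup>2 + v * d\<^sup>2))"
  using assms by (intro real_le_rsqrt) (simp add: lagrange_identity_weighted)

lemma weighted_cauchy_schwarz2_strict:
  fixes u v a b c d :: real
  assumes "0 < u" "0 < v" "a * d \<noteq> b * c"
  shows "u * a * c + v * b * d < sqrt ((u * a\<^sup>2 + v * b\<^sup>2) * (u * c\<^sup>2 + v * d\<^sup>2))"
  using assms by (intro real_less_rsqrt) (simp add: lagrange_identity_weighted)

lemma linear_form_on_unit_circle_le:
  fixes A B a :: real
  assumes "\<bar>a\<bar> \<le> 1"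
  shows "A * a + B * sqrt (1 - a\<^sup>2) \<le> sqrt (A\<^sup>2 + B\<^sup>2)"
proof -
  have "a\<^sup>2 + (sqrt (1 - a\<^sup>2))\<^sup>2 = 1"
    using assms by (simp add: abs_square_le_1)
  then show ?thesis
    using weighted_cauchy_schwarz2[where u=1 and v=1 and a=A and b=B and c=a and d="sqrt (1 - a\<^sup>2)"]
    by simp
qed

lemma linear_form_on_unit_circle_eq_iff:
  fixes A B a :: real
  assumes "0 < A" "0 \<le> B" "\<bar>a\<bar> \<le> 1"
  shows "A * a + B * sqrt (1 - a\<^sup>2) = sqrt (A\<^sup>2 + B\<^sup>2) \<longleftrightarrow> a = A / sqrt (A\<^sup>2 + B\<^sup>2)"
proof -
  define b N where "b = sqrt (1 - a\<^sup>2)" and "N = sqrt (A\<^sup>2 + B\<^sup>2)"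
  have circle: "a\<^sup>2 + b\<^sup>2 = 1" "0 \<le> b"
    using assms(3) by (simp_all add: b_def abs_square_le_1)
  have "0 < A\<^sup>2 + B\<^sup>2" using assms(1) by (simp add: add_pos_nonneg)
  then have N: "0 < N" "N\<^sup>2 = A\<^sup>2 + B\<^sup>2" by (simp_all add: N_def)
  show ?thesis
    unfolding b_def[symmetric] N_def[symmetric]
  proof
    assume max: "A * a + B * b = N"
    have "N\<^sup>2 = N\<^sup>2 + (A * b - B * a)\<^sup>2"
      using lagrange_identity_weighted[where u=1 and v=1 and a=A and b=B and c=a and d=b] circle N max
      by simp
    then have parallel: "A * b = B * a" by simp
    have "A = A * (a\<^sup>2 + b\<^sup>2)" using circle by simp
    also have "\<dots> = a * (A * a + B * b)" using parallel by (simp add: power2_eq_square algebra_simps)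
    finally show "a = A / N" using max N by (simp add: field_simps)
  next
    assume a: "a = A / N"
    have "b\<^sup>2 = 1 - (A / N)\<^sup>2" using circle a by simp
    also have "\<dots> = (N\<^sup>2 - A\<^sup>2) / N\<^sup>2" using N(1) by (simp add: power_divide field_simps)
    also have "\<dots> = (B / N)\<^sup>2" by (simp add: N(2) power_divide)
    finally have "b\<^sup>2 = (B / N)\<^sup>2" .
    then have "b = B / N"
      using circle N assms(2) by (simp add: power2_eq_iff_nonneg)
    then have "A * a + B * b = N\<^sup>2 / N"
      using a N(2) by (simp add: power2_eq_square add_divide_distrib)
    then show "A * a + B * b = N"
      using N(1) by (simp add: power2_eq_square)
  qed
qed

lemma sqrt_mult_affine_concave_combination:
  fixes c d x y u v :: real
  assumes "0 \<le> c" "0 \<le> d" "0 \<le> x" "0 \<le> y" "0 \<le> u" "0 \<le> v" "u + v = 1"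
  shows "u * sqrt (x * (c + d * x)) + v * sqrt (y * (c + d * y))
           \<le> sqrt ((u * x + v * y) * (c + d * (u * x + v * y)))"
    and "0 < c \<Longrightarrow> 0 < u \<Longrightarrow> 0 < v \<Longrightarrow> x \<noteq> y \<Longrightarrow>
         u * sqrt (x * (c + d * x)) + v * sqrt (y * (c + d * y))
           < sqrt ((u * x + v * y) * (c + d * (u * x + v * y)))"
proof -
  define a b p q
    where "a = sqrt x" and "b = sqrt y" and "p = sqrt (c + d * x)" and "q = sqrt (c + d * y)"
  have squares: "a\<^sup>2 = x" "b\<^sup>2 = y" "p\<^sup>2 = c + d * x" "q\<^sup>2 = c + d * y"
    using assms by (simp_all add: a_def b_def p_def q_def)
  have lhs: "u * sqrt (x * (c + d * x)) + v * sqrt (y * (c + d * y)) = u * a * p + v * b * q"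
    by (simp add: a_def b_def p_def q_def real_sqrt_mult)
  have "u * p\<^sup>2 + v * q\<^sup>2 = (u + v) * c + d * (u * x + v * y)"
    by (simp add: squares algebra_simps)
  then have rhs: "sqrt ((u * x + v * y) * (c + d * (u * x + v * y)))
      = sqrt ((u * a\<^sup>2 + v * b\<^sup>2) * (u * p\<^sup>2 + v * q\<^sup>2))"
    using assms(7) by (simp add: squares)
  show "u * sqrt (x * (c + d * x)) + v * sqrt (y * (c + d * y))
          \<le> sqrt ((u * x + v * y) * (c + d * (u * x + v * y)))"
    unfolding lhs rhs using assms(5,6) by (rule weighted_cauchy_schwarz2)
  assume "0 < c" "0 < u" "0 < v" "x \<noteq> y"
  have "a * q \<noteq> b * p"
  proof
    assume "a * q = b * p"
    then have "a\<^sup>2 * q\<^sup>2 = b\<^sup>2 * p\<^sup>2" by (metis power_mult_distrib)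
    then have "c * x = c * y" by (simp add: squares algebra_simps)
    with \<open>0 < c\<close> \<open>x \<noteq> y\<close> show False by simp
  qed
  then show "u * sqrt (x * (c + d * x)) + v * sqrt (y * (c + d * y))
               < sqrt ((u * x + v * y) * (c + d * (u * x + v * y)))"
    unfolding lhs rhs using \<open>0 < u\<close> \<open>0 < v\<close> by (intro weighted_cauchy_schwarz2_strict)
qed

lemma concave_on_sqrt_mult_affine:
  fixes c d :: real
  assumes "0 \<le> c" "0 \<le> d"
  shows "concave_on {0..} (\<lambda>q. sqrt (q * (c + d * q)))"
  unfolding concave_on_iff
  using sqrt_mult_affine_concave_combination(1)[OF assms] by auto

lemma concave_on_subset: "concave_on T f \<Longrightarrow> S \<subseteq> T \<Longrightarrow> convex S \<Longrightarrow> concave_on S f"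
  unfolding concave_on_def by (rule convex_on_subset)

lemma concave_on_stationary_point_max:
  fixes f :: "real \<Rightarrow> real"
  assumes "concave_on A f" "connected A" "c \<in> interior A" "x \<in> A"
    and "(f has_real_derivative 0) (at c)"
  shows "f x \<le> f c"
proof -
  have convex: "convex_on A (\<lambda>x. - f x)"
    using assms(1) by (simp add: concave_on_def)
  have "((\<lambda>x. - f x) has_real_derivative - 0) (at c within A)"
    using DERIV_minus[OF assms(5)] by (rule has_field_derivative_at_within)
  then have "- f x - - f c \<ge> - 0 * (x - c)"
    by (rule convex_on_imp_above_tangent[OF convex assms(2-4)])
  then show ?thesis by simp
qed

lemma midpoint_strict_concave_unique_maximizer:
  fixes f :: "real \<Rightarrow> real"
  assumes "convex A"
    and strict: "\<And>x y. x \<in> A \<Longrightarrow> y \<in> A \<Longrightarrow> x \<noteq> y \<Longrightarrow> (f x + f y) / 2 < f ((x + y) / 2)"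
    and "x \<in> A" "y \<in> A" "\<forall>z \<in> A. f z \<le> f x" "\<forall>z \<in> A. f z \<le> f y"
  shows "x = y"
proof (rule ccontr)
  assume "x \<noteq> y"
  have "(x + y) / 2 \<in> A"
    using convexD[OF assms(1,3,4), of "1/2" "1/2"] by (simp add: add_divide_distrib)
  moreover have "f x = f y" using assms(3-6) by (simp add: order_antisym)
  ultimately show False
    using strict[OF assms(3,4) \<open>x \<noteq> y\<close>] assms(5) by fastforce
qed

lemma qP_nonneg: "0 \<le> qP \<beta>"
  by (simp add: qP_def)

lemma qP_less_one: "0 < \<beta> \<Longrightarrow> qP \<beta> < 1"
  by (simp add: qP_def)

lemma Plef_less_one_iff: "r \<in> Plef \<beta> \<and> r < 1 \<longleftrightarrow> 0 \<le> r \<and> r\<^sup>2 \<in> {qP \<beta>..<1}"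
proof (cases "0 \<le> r")
  case True
  then have "sqrt (qP \<beta>) \<le> r \<longleftrightarrow> qP \<beta> \<le> r\<^sup>2"
    using real_sqrt_le_iff[of "qP \<beta>" "r\<^sup>2"] by simp
  moreover have "r < 1 \<longleftrightarrow> r\<^sup>2 < 1" using True by (simp add: abs_square_less_1)
  ultimately show ?thesis using True by (auto simp: Plef_def)
next
  case False
  then have "r \<notin> Plef \<beta>"
    using real_sqrt_ge_zero[OF qP_nonneg, of \<beta>] unfolding Plef_def atLeastAtMost_iff by linarith
  with False show ?thesis by simp
qed

lemma sqrt_mem_Plef: "q \<in> {qP \<beta>..<1} \<Longrightarrow> sqrt q \<in> Plef \<beta>"
  using Plef_less_one_iff[of "sqrt q"] qP_nonneg[of \<beta>] by simp

definition g_sq :: "real \<Rightarrow> real \<Rightarrow> real" where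
  "g_sq \<beta> q = ln (1 - q) / 2 + \<beta>\<^sup>2 / 2 * (1 - q)\<^sup>2"

lemma Bscr_eq_sqrt_plus_g_sq:
  "Bscr h \<beta> = (\<lambda>q. sqrt (q * (h\<^sup>2 + 2 * \<beta>\<^sup>2 * q)) + g_sq \<beta> q)"
  by (auto simp: Bscr_def g_sq_def power2_eq_square algebra_simps)

lemma g_sq_has_real_derivative:
  "q < 1 \<Longrightarrow> (g_sq \<beta> has_real_derivative - inverse (1 - q) / 2 - \<beta>\<^sup>2 * (1 - q)) (at q)"
  unfolding g_sq_def by (auto intro!: derivative_eq_intros simp: power2_eq_square field_simps)

text \<open>The second derivative \<beta>^2 - 1 / (2 (1 - q)^2) is nonpositive exactly on this interval,
  which is where the threshold qP comes from.\<close>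

lemma concave_on_g_sq:
  assumes "0 < \<beta>"
  shows "concave_on {1 - 1 / (sqrt 2 * \<beta>)..<1} (g_sq \<beta>)"
proof (rule f''_le0_imp_concave[where f' = "\<lambda>q. - inverse (1 - q) / 2 - \<beta>\<^sup>2 * (1 - q)"
      and f'' = "\<lambda>q. \<beta>\<^sup>2 - inverse ((1 - q)\<^sup>2) / 2"])
  fix q assume q: "q \<in> {1 - 1 / (sqrt 2 * \<beta>)..<1}"
  then show "(g_sq \<beta> has_real_derivative - inverse (1 - q) / 2 - \<beta>\<^sup>2 * (1 - q)) (at q)"
    by (intro g_sq_has_real_derivative) simp
  show "((\<lambda>q. - inverse (1 - q) / 2 - \<beta>\<^sup>2 * (1 - q)) has_real_derivative
          \<beta>\<^sup>2 - inverse ((1 - q)\<^sup>2) / 2) (at q)"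
    using q by (auto intro!: derivative_eq_intros simp: power2_eq_square inverse_mult_distrib)
  have "0 < 1 - q" "1 - q \<le> 1 / (sqrt 2 * \<beta>)" using q by auto
  then have "(1 - q)\<^sup>2 \<le> (1 / (sqrt 2 * \<beta>))\<^sup>2" by (intro power_mono) auto
  then have "2 * \<beta>\<^sup>2 * (1 - q)\<^sup>2 \<le> 1"
    using assms by (simp add: power_divide power_mult_distrib field_simps)
  then show "\<beta>\<^sup>2 - inverse ((1 - q)\<^sup>2) / 2 \<le> 0"
    using \<open>0 < 1 - q\<close> by (simp add: field_simps)
qed simp

lemma concave_on_g_sq_qP:
  assumes "0 < \<beta>"
  shows "concave_on {qP \<beta>..<1} (g_sq \<beta>)"
  by (rule concave_on_subset[OF concave_on_g_sq[OF assms]]) (auto simp: qP_def)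

lemma concave_on_Bscr:
  assumes "0 < \<beta>"
  shows "concave_on {qP \<beta>..<1} (Bscr h \<beta>)"
  unfolding Bscr_eq_sqrt_plus_g_sq
proof (rule concave_on_add)
  show "concave_on {qP \<beta>..<1} (\<lambda>q. sqrt (q * (h\<^sup>2 + 2 * \<beta>\<^sup>2 * q)))"
    by (rule concave_on_subset[OF concave_on_sqrt_mult_affine]) (use qP_nonneg[of \<beta>] in auto)
qed (rule concave_on_g_sq_qP[OF assms])

lemma Bscr_midpoint_strict:
  assumes "h \<noteq> 0" "0 < \<beta>" "x \<in> {qP \<beta>..<1}" "y \<in> {qP \<beta>..<1}" "x \<noteq> y"
  shows "(Bscr h \<beta> x + Bscr h \<beta> y) / 2 < Bscr h \<beta> ((x + y) / 2)"
proof -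
  have "x \<ge> 0" "y \<ge> 0" using assms(3,4) qP_nonneg[of \<beta>] by auto
  then have "(sqrt (x * (h\<^sup>2 + 2 * \<beta>\<^sup>2 * x)) + sqrt (y * (h\<^sup>2 + 2 * \<beta>\<^sup>2 * y))) / 2
      < sqrt ((x + y) / 2 * (h\<^sup>2 + 2 * \<beta>\<^sup>2 * ((x + y) / 2)))"
    using sqrt_mult_affine_concave_combination(2)[of "h\<^sup>2" "2 * \<beta>\<^sup>2" x y "1/2" "1/2"] assms
    by (simp add: add_divide_distrib)
  moreover have "(g_sq \<beta> x + g_sq \<beta> y) / 2 \<le> g_sq \<beta> ((x + y) / 2)"
    using concave_onD[OF concave_on_g_sq_qP[OF assms(2)], of "1/2" x y] assms
    by (simp add: add_divide_distrib)
  ultimately show ?thesis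
    unfolding Bscr_eq_sqrt_plus_g_sq by (simp add: add_divide_distrib)
qed

lemma Bscr_has_real_derivative:
  assumes "h \<noteq> 0" "0 < q" "q < 1"
  shows "(Bscr h \<beta> has_real_derivative
            (h\<^sup>2 + 4 * \<beta>\<^sup>2 * q) / (2 * sqrt (q * (h\<^sup>2 + 2 * \<beta>\<^sup>2 * q)))
            - inverse (1 - q) / 2 - \<beta>\<^sup>2 * (1 - q)) (at q)"
proof -
  have "0 < q * (h\<^sup>2 + 2 * \<beta>\<^sup>2 * q)"
    using assms by (simp add: add_pos_nonneg)
  then have "((\<lambda>q. sqrt (q * (h\<^sup>2 + 2 * \<beta>\<^sup>2 * q))) has_real_derivative
      (h\<^sup>2 + 4 * \<beta>\<^sup>2 * q) / (2 * sqrt (q * (h\<^sup>2 + 2 * \<beta>\<^sup>2 * q)))) (at q)"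
    by (auto intro!: derivative_eq_intros simp: field_simps)
  then show ?thesis
    unfolding Bscr_eq_sqrt_plus_g_sq
    using g_sq_has_real_derivative[OF assms(3)] by (rule DERIV_add[THEN DERIV_cong]) simp
qed

text \<open>With s = sqrt q and m = sqrt (h^2 + 2 \<beta>^2 q) the root equation says 1 - q = s / m,
  and then the three terms of the derivative cancel.\<close>

lemma Bscr_stationary_at_root:
  assumes "h \<noteq> 0" "0 < q" "q < 1" and root: "q / (h\<^sup>2 + 2 * q * \<beta>\<^sup>2) = (1 - q)\<^sup>2"
  shows "(Bscr h \<beta> has_real_derivative 0) (at q)"
proof -
  define s m where "s = sqrt q" and "m = sqrt (h\<^sup>2 + 2 * \<beta>\<^sup>2 * q)"
  have "0 < h\<^sup>2 + 2 * \<beta>\<^sup>2 * q" using assms by (simp add: add_pos_nonneg)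
  then have m: "0 < m" "m\<^sup>2 = h\<^sup>2 + 2 * \<beta>\<^sup>2 * q" by (simp_all add: m_def)
  have s: "0 < s" "s\<^sup>2 = q" using assms by (simp_all add: s_def)
  have "1 - q = sqrt ((1 - q)\<^sup>2)" using assms by simp
  also have "\<dots> = s / m"
    by (simp add: s_def m_def real_sqrt_divide mult.commute flip: root)
  finally have one_minus_q: "1 - q = s / m" .
  have "sqrt (q * (h\<^sup>2 + 2 * \<beta>\<^sup>2 * q)) = s * m"
    by (simp add: s_def m_def real_sqrt_mult)
  then have "(h\<^sup>2 + 4 * \<beta>\<^sup>2 * q) / (2 * sqrt (q * (h\<^sup>2 + 2 * \<beta>\<^sup>2 * q)))
      - inverse (1 - q) / 2 - \<beta>\<^sup>2 * (1 - q)
      = (h\<^sup>2 + 4 * \<beta>\<^sup>2 * q - m\<^sup>2 - 2 * \<beta>\<^sup>2 * s\<^sup>2) / (2 * s * m)"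
    using s(1) m(1) by (simp add: one_minus_q field_simps power2_eq_square)
  also have "\<dots> = 0" by (simp add: s m)
  finally show ?thesis
    using Bscr_has_real_derivative[OF assms(1-3), of \<beta>] by (simp only:)
qed

lemma Bscr_le_at_root:
  assumes "h \<noteq> 0" "0 < \<beta>" "q \<in> {qP \<beta><..<1}"
    and root: "q / (h\<^sup>2 + 2 * q * \<beta>\<^sup>2) = (1 - q)\<^sup>2" and "x \<in> {qP \<beta>..<1}"
  shows "Bscr h \<beta> x \<le> Bscr h \<beta> q"
proof (rule concave_on_stationary_point_max[OF concave_on_Bscr[OF assms(2)] _ _ assms(5)])
  show "(Bscr h \<beta> has_real_derivative 0) (at q)"
    using assms(3) qP_nonneg[of \<beta>] by (intro Bscr_stationary_at_root[OF assms(1) _ _ root]) auto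
qed (use assms(3) in \<open>auto intro: convex_connected\<close>)

lemma Bscr_maximizer_unique:
  assumes "h \<noteq> 0" "0 < \<beta>" "x \<in> {qP \<beta>..<1}" "y \<in> {qP \<beta>..<1}"
    and "\<forall>z \<in> {qP \<beta>..<1}. Bscr h \<beta> z \<le> Bscr h \<beta> x"
    and "\<forall>z \<in> {qP \<beta>..<1}. Bscr h \<beta> z \<le> Bscr h \<beta> y"
  shows "x = y"
  using Bscr_midpoint_strict[OF assms(1,2)] assms(3-6)
  by (rule midpoint_strict_concave_unique_maximizer[OF convex_real_interval(7)])

lemma Bscr_root_unique:
  assumes "h \<noteq> 0" "0 < \<beta>" "x \<in> {qP \<beta><..<1}" "y \<in> {qP \<beta><..<1}"
    and "x / (h\<^sup>2 + 2 * x * \<beta>\<^sup>2) = (1 - x)\<^sup>2" "y / (h\<^sup>2 + 2 * y * \<beta>\<^sup>2) = (1 - y)\<^sup>2"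
  shows "x = y"
  using assms Bscr_le_at_root[OF assms(1,2)]
  by (intro Bscr_maximizer_unique[OF assms(1,2)]) auto

lemma Bscr_root_exists:
  assumes "h \<noteq> 0" "0 < \<beta>"
  shows "\<exists>q \<in> {qP \<beta><..<1}. q / (h\<^sup>2 + 2 * q * \<beta>\<^sup>2) = (1 - q)\<^sup>2"
proof -
  define F where "F q = q - (1 - q)\<^sup>2 * (h\<^sup>2 + 2 * \<beta>\<^sup>2 * q)" for q
  have F_qP: "F (qP \<beta>) < 0"
  proof (cases "qP \<beta> = 0")
    case True
    then show ?thesis using assms(1) by (simp add: F_def)
  next
    case False
    then have "qP \<beta> = 1 - 1 / (sqrt 2 * \<beta>)" by (simp add: qP_def)
    then have "(1 - qP \<beta>)\<^sup>2 = 1 / (2 * \<beta>\<^sup>2)" by (simp add: power_divide power_mult_distrib)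
    then have "F (qP \<beta>) = - h\<^sup>2 / (2 * \<beta>\<^sup>2)" using assms(2) by (simp add: F_def field_simps)
    then show ?thesis using assms by simp
  qed
  have F_1: "F 1 = 1" by (simp add: F_def)
  have "\<forall>x. qP \<beta> \<le> x \<and> x \<le> 1 \<longrightarrow> isCont F x"
    unfolding F_def by (auto intro!: continuous_intros)
  then have "\<exists>q \<ge> qP \<beta>. q \<le> 1 \<and> F q = 0"
    using F_qP F_1 qP_less_one[OF assms(2)] by (intro IVT) auto
  then obtain q where q: "qP \<beta> \<le> q" "q \<le> 1" "F q = 0" by blast
  then have "q \<in> {qP \<beta><..<1}" using F_qP F_1 by (auto simp: order_le_less)
  moreover have "0 < h\<^sup>2 + 2 * q * \<beta>\<^sup>2"
    using assms(1) q(1) qP_nonneg[of \<beta>] by (simp add: add_pos_nonneg)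
  then have "q / (h\<^sup>2 + 2 * q * \<beta>\<^sup>2) = (1 - q)\<^sup>2"
    using q(3) by (simp add: F_def field_simps)
  ultimately show ?thesis by blast
qed

lemma Btilde_at_one: "Btilde h \<beta> a 1 = -\<infinity>"
  by (simp add: Btilde_def gfun_def)

lemma Btilde_of_less_one:
  assumes "0 \<le> r" "r < 1"
  shows "Btilde h \<beta> a r
    = ereal ((h * r) * a + (sqrt 2 * \<beta> * r\<^sup>2) * sqrt (1 - a\<^sup>2) + g_sq \<beta> (r\<^sup>2))"
proof -
  have "r\<^sup>2 \<noteq> 1" using assms by (simp add: abs_square_eq_1)
  then show ?thesis by (simp add: Btilde_def gfun_def g_sq_def algebra_simps)
qed

lemma Bscr_at_square: "Bscr h \<beta> (r\<^sup>2) = sqrt ((h * r)\<^sup>2 + (sqrt 2 * \<beta> * r\<^sup>2)\<^sup>2) + g_sq \<beta> (r\<^sup>2)"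
  by (simp add: Bscr_def g_sq_def power_mult_distrib)

lemma Btilde_le_Bscr:
  assumes "a \<in> {-1..1}" "0 \<le> r" "r < 1"
  shows "Btilde h \<beta> a r \<le> ereal (Bscr h \<beta> (r\<^sup>2))"
  using linear_form_on_unit_circle_le[of a "h * r" "sqrt 2 * \<beta> * r\<^sup>2"] assms
  by (simp add: Btilde_of_less_one Bscr_at_square abs_le_iff)

lemma Btilde_eq_Bscr_iff:
  assumes "0 < h" "0 \<le> \<beta>" "a \<in> {-1..1}" "0 < r" "r < 1"
  shows "Btilde h \<beta> a r = ereal (Bscr h \<beta> (r\<^sup>2)) \<longleftrightarrow> a = h / sqrt (h\<^sup>2 + 2 * \<beta>\<^sup>2 * r\<^sup>2)"
proof -
  have "(h * r)\<^sup>2 + (sqrt 2 * \<beta> * r\<^sup>2)\<^sup>2 = r\<^sup>2 * (h\<^sup>2 + 2 * \<beta>\<^sup>2 * r\<^sup>2)"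
    by (simp add: power_mult_distrib power2_eq_square algebra_simps)
  then have "h * r / sqrt ((h * r)\<^sup>2 + (sqrt 2 * \<beta> * r\<^sup>2)\<^sup>2) = h / sqrt (h\<^sup>2 + 2 * \<beta>\<^sup>2 * r\<^sup>2)"
    using assms(4) by (simp add: real_sqrt_mult)
  then show ?thesis
    using linear_form_on_unit_circle_eq_iff[of "h * r" "sqrt 2 * \<beta> * r\<^sup>2" a] assms
    by (simp add: Btilde_of_less_one Bscr_at_square abs_le_iff)
qed

lemma Btilde_attains_Bscr:
  assumes "0 < h" "0 \<le> \<beta>" "0 < q" "q < 1"
  shows "h / sqrt (h\<^sup>2 + 2 * \<beta>\<^sup>2 * q) \<in> {-1..1}"
    and "Btilde h \<beta> (h / sqrt (h\<^sup>2 + 2 * \<beta>\<^sup>2 * q)) (sqrt q) = ereal (Bscr h \<beta> q)"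
proof -
  have "h \<le> sqrt (h\<^sup>2 + 2 * \<beta>\<^sup>2 * q)" using assms(3) by (intro real_le_rsqrt) auto
  moreover have "0 < sqrt (h\<^sup>2 + 2 * \<beta>\<^sup>2 * q)" using assms by (simp add: add_pos_nonneg)
  ultimately have "0 \<le> h / sqrt (h\<^sup>2 + 2 * \<beta>\<^sup>2 * q)" "h / sqrt (h\<^sup>2 + 2 * \<beta>\<^sup>2 * q) \<le> 1"
    using assms(1) by simp_all
  then show a: "h / sqrt (h\<^sup>2 + 2 * \<beta>\<^sup>2 * q) \<in> {-1..1}" by simp
  show "Btilde h \<beta> (h / sqrt (h\<^sup>2 + 2 * \<beta>\<^sup>2 * q)) (sqrt q) = ereal (Bscr h \<beta> q)"
    using Btilde_eq_Bscr_iff[OF assms(1,2) a, of "sqrt q"] assms(3,4) by simp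
qed

lemma Btilde_le_of_Bscr_le:
  assumes "\<forall>q \<in> {qP \<beta>..<1}. Bscr h \<beta> q \<le> M" "a \<in> {-1..1}" "r \<in> Plef \<beta>"
  shows "Btilde h \<beta> a r \<le> ereal M"
proof (cases "r < 1")
  case True
  then have "0 \<le> r" "r\<^sup>2 \<in> {qP \<beta>..<1}" using Plef_less_one_iff assms(3) by blast+
  then show ?thesis
    using Btilde_le_Bscr[OF assms(2) _ True] assms(1) by (meson ereal_less_eq(3) order_trans)
next
  case False
  then have "r = 1" using assms(3) by (simp add: Plef_def)
  then show ?thesis by (simp add: Btilde_at_one)
qed

lemma Btilde_maximizer_eq:
  assumes "0 < h" "0 \<le> \<beta>" "qh \<in> {qP \<beta><..<1}"
    and max: "\<forall>q \<in> {qP \<beta>..<1}. Bscr h \<beta> q \<le> Bscr h \<beta> qh"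
    and unique: "\<forall>q' \<in> {qP \<beta>..<1}. (\<forall>q \<in> {qP \<beta>..<1}. Bscr h \<beta> q \<le> Bscr h \<beta> q') \<longrightarrow> q' = qh"
    and a: "a \<in> {-1..1}" and r: "r \<in> Plef \<beta>"
    and a_r_max: "\<forall>a' \<in> {-1..1}. \<forall>r' \<in> Plef \<beta>. Btilde h \<beta> a' r' \<le> Btilde h \<beta> a r"
  shows "a = h / sqrt (h\<^sup>2 + 2 * \<beta>\<^sup>2 * qh) \<and> r = sqrt qh"
proof -
  have qh: "0 < qh" "qh < 1" using assms(3) qP_nonneg[of \<beta>] by auto
  have "sqrt qh \<in> Plef \<beta>" using assms(3) by (intro sqrt_mem_Plef) auto
  then have ge: "ereal (Bscr h \<beta> qh) \<le> Btilde h \<beta> a r"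
    using a_r_max Btilde_attains_Bscr[OF assms(1,2) qh] by metis
  then have "r \<noteq> 1" by (auto simp: Btilde_at_one)
  then have "r < 1" using r by (simp add: Plef_def)
  then have r_sq: "0 \<le> r" "r\<^sup>2 \<in> {qP \<beta>..<1}" using Plef_less_one_iff r by blast+
  have le: "Btilde h \<beta> a r \<le> ereal (Bscr h \<beta> (r\<^sup>2))"
    by (rule Btilde_le_Bscr[OF a r_sq(1) \<open>r < 1\<close>])
  have "Bscr h \<beta> qh \<le> Bscr h \<beta> (r\<^sup>2)" using order_trans[OF ge le] by simp
  with max have "\<forall>q \<in> {qP \<beta>..<1}. Bscr h \<beta> q \<le> Bscr h \<beta> (r\<^sup>2)"
    by (meson order.trans)
  then have "r\<^sup>2 = qh" using unique r_sq(2) by blast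
  then have r_eq: "r = sqrt qh" using r_sq(1) by auto
  have "0 < r" using r_sq(1) \<open>r\<^sup>2 = qh\<close> qh by (cases "r = 0") auto
  moreover have "Btilde h \<beta> a r = ereal (Bscr h \<beta> (r\<^sup>2))"
    using le ge \<open>r\<^sup>2 = qh\<close> by simp
  ultimately show ?thesis
    using Btilde_eq_Bscr_iff[OF assms(1,2) a _ \<open>r < 1\<close>] \<open>r\<^sup>2 = qh\<close> r_eq by simp
qed

theorem lemma5p3:
  fixes h \<beta> :: real
  assumes "h > 0" and "\<beta> > 0"
  shows "(SUP p \<in> {-1..1} \<times> Plef \<beta>. Btilde h \<beta> (fst p) (snd p))
           = (SUP q \<in> {qP \<beta>..<1}. ereal (Bscr h \<beta> q))
    \<and> concave_on {qP \<beta>..<1} (Bscr h \<beta>)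
    \<and> (\<exists>qh. (qh \<in> {qP \<beta>..<1} \<and> (\<forall>q \<in> {qP \<beta>..<1}. Bscr h \<beta> q \<le> Bscr h \<beta> qh))
          \<and> (\<forall>q' \<in> {qP \<beta>..<1}. (\<forall>q \<in> {qP \<beta>..<1}. Bscr h \<beta> q \<le> Bscr h \<beta> q') \<longrightarrow> q' = qh)
          \<and> qh \<in> {qP \<beta><..<1} \<and> qh / (h\<^sup>2 + 2 * qh * \<beta>\<^sup>2) = (1 - qh)\<^sup>2
          \<and> (\<forall>q \<in> {qP \<beta><..<1}. q / (h\<^sup>2 + 2 * q * \<beta>\<^sup>2) = (1 - q)\<^sup>2 \<longrightarrow> q = qh)
          \<and> (let rh = sqrt qh; ah = h / sqrt (h\<^sup>2 + 2 * \<beta>\<^sup>2 * qh) in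
               ah \<in> {-1..1} \<and> rh \<in> Plef \<beta>
             \<and> (\<forall>a \<in> {-1..1}. \<forall>r \<in> Plef \<beta>. Btilde h \<beta> a r \<le> Btilde h \<beta> ah rh)
             \<and> (\<forall>a \<in> {-1..1}. \<forall>r \<in> Plef \<beta>.
                  (\<forall>a' \<in> {-1..1}. \<forall>r' \<in> Plef \<beta>. Btilde h \<beta> a' r' \<le> Btilde h \<beta> a r)
                  \<longrightarrow> a = ah \<and> r = rh)))"
proof -
  let ?C = "{qP \<beta>..<1}" and ?B = "Bscr h \<beta>"
  have h: "h \<noteq> 0" using assms(1) by simp
  obtain qh where qh: "qh \<in> {qP \<beta><..<1}" "qh / (h\<^sup>2 + 2 * qh * \<beta>\<^sup>2) = (1 - qh)\<^sup>2"
    using Bscr_root_exists[OF h assms(2)] by blast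
  then have qh_C: "qh \<in> ?C" and qh_pos: "0 < qh" "qh < 1" using qP_nonneg[of \<beta>] by auto
  have qh_max: "\<forall>q \<in> ?C. ?B q \<le> ?B qh" using Bscr_le_at_root[OF h assms(2) qh] by blast
  have qh_unique: "\<forall>q' \<in> ?C. (\<forall>q \<in> ?C. ?B q \<le> ?B q') \<longrightarrow> q' = qh"
    using Bscr_maximizer_unique[OF h assms(2) _ qh_C _ qh_max] by blast
  have roots_unique: "\<forall>q \<in> {qP \<beta><..<1}. q / (h\<^sup>2 + 2 * q * \<beta>\<^sup>2) = (1 - q)\<^sup>2 \<longrightarrow> q = qh"
    using Bscr_root_unique[OF h assms(2) _ qh(1) _ qh(2)] by blast
  let ?rh = "sqrt qh" and ?ah = "h / sqrt (h\<^sup>2 + 2 * \<beta>\<^sup>2 * qh)"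
  have ah: "?ah \<in> {-1..1}" and attained: "Btilde h \<beta> ?ah ?rh = ereal (?B qh)"
    using Btilde_attains_Bscr[OF assms(1) _ qh_pos] assms(2) by auto
  have rh: "?rh \<in> Plef \<beta>" using sqrt_mem_Plef[OF qh_C] .
  have bound: "\<forall>a \<in> {-1..1}. \<forall>r \<in> Plef \<beta>. Btilde h \<beta> a r \<le> Btilde h \<beta> ?ah ?rh"
    using Btilde_le_of_Bscr_le[OF qh_max] attained by simp
  have sup_Btilde: "(SUP p \<in> {-1..1} \<times> Plef \<beta>. Btilde h \<beta> (fst p) (snd p)) = ereal (?B qh)"
  proof (rule cSup_eq_maximum)
    show "ereal (?B qh) \<in> (\<lambda>p. Btilde h \<beta> (fst p) (snd p)) ` ({-1..1} \<times> Plef \<beta>)"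
      by (rule image_eqI[where x = "(?ah, ?rh)"]) (use ah rh attained in auto)
  qed (use bound attained in auto)
  have sup_Bscr: "(SUP q \<in> ?C. ereal (?B q)) = ereal (?B qh)"
    by (rule cSup_eq_maximum) (use qh_C qh_max in auto)
  show ?thesis
    unfolding Let_def sup_Btilde sup_Bscr
    using concave_on_Bscr[OF assms(2)] qh qh_C qh_max qh_unique roots_unique ah rh bound
      Btilde_maximizer_eq[OF assms(1) less_imp_le[OF assms(2)] qh(1) qh_max qh_unique]
    by blast
qed

end
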